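(* Let $T$ be a map on $[0,1]$ and $\nu$ a $T$-invariant exponentially mixing probability measure. Let $s\ge0$. Then for $\nu$-a.e. $x$, $\{y:\overline R(x,y)\ge s\}\subset\{y:\overline d_\nu(y)\ge s\}$.
   Context: A $T$-invariant measure $\nu$ on $[0,1]$ is exponentially mixing if there exist $C>0$ and $0<\beta<1$ such that for every ball $A$, every Borel set $B$ and every $n\ge1$, $|\nu(A\cap T^{-n}B)-\nu(A)\nu(B)|\le C\beta^n\nu(B)$. $B(y,r)$ is the open ball. $\tau_r(x,y)=\inf\{n\ge1:T^nx\in B(y,r)\}$ and $\overline R(x,y)=\limsup_{r\to0}\frac{\log\tau_r(x,y)}{-\log r}$, with $\tau_r(x,y)=\infty$ and $\overline R(x,y)=\infty$ when the forward orbit $\{T^nx:n\ge1\}$ misses $B(y,r)$. $\overline d_\nu(y)=\limsup_{r\to0}\frac{\log\nu(B(y,r))}{\log r}$. *)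

theory Defs
  imports "HOL-Analysis.Analysis" "HOL-Probability.Probability"
begin

definition hit_time :: "(real \<Rightarrow> real) \<Rightarrow> real \<Rightarrow> real \<Rightarrow> real \<Rightarrow> ereal" where
  "hit_time T r x y =
     (if \<exists>n::nat. n \<ge> 1 \<and> (T ^^ n) x \<in> ball y r
      then ereal (real (LEAST n::nat. n \<ge> 1 \<and> (T ^^ n) x \<in> ball y r))
      else \<infinity>)"

definition upper_hit_exp :: "(real \<Rightarrow> real) \<Rightarrow> real \<Rightarrow> real \<Rightarrow> ereal" where
  "upper_hit_exp T x y =
     Limsup (at_right 0)
       (\<lambda>r. if hit_time T r x y = \<infinity> then \<infinity>
             else ereal (ln (real_of_ereal (hit_time T r x y)) / (- ln r)))"

text \<open>Upper local dimension: limsup as r \<rightarrow> 0 of log nu(B(y,r)) / log r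
  (with log 0 = -\<infinity>, so the quotient is +\<infinity> when the ball is null).\<close>
definition upper_local_dim :: "real measure \<Rightarrow> real \<Rightarrow> ereal" where
  "upper_local_dim \<nu> y =
     Limsup (at_right 0)
       (\<lambda>r. if measure \<nu> (ball y r \<inter> space \<nu>) = 0 then \<infinity>
             else ereal (ln (measure \<nu> (ball y r \<inter> space \<nu>)) / ln r))"

definition invariant_measure :: "(real \<Rightarrow> real) \<Rightarrow> real measure \<Rightarrow> bool" where
  "invariant_measure T \<nu> \<longleftrightarrow> T \<in> measurable \<nu> \<nu> \<and>
     (\<forall>B\<in>sets \<nu>. measure \<nu> (T -` B \<inter> space \<nu>) = measure \<nu> B)"

definition exp_mixing :: "(real \<Rightarrow> real) \<Rightarrow> real measure \<Rightarrow> bool" where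
  "exp_mixing T \<nu> \<longleftrightarrow>
     (\<exists>C::real. \<exists>\<beta>::real. C > 0 \<and> 0 < \<beta> \<and> \<beta> < 1 \<and>
       (\<forall>y\<in>space \<nu>. \<forall>r>0. \<forall>B\<in>sets \<nu>. \<forall>n::nat. n \<ge> 1 \<longrightarrow>
          \<bar>measure \<nu> (ball y r \<inter> (T ^^ n) -` B \<inter> space \<nu>)
            - measure \<nu> (ball y r \<inter> space \<nu>) * measure \<nu> B\<bar>
          \<le> C * \<beta> ^ n * measure \<nu> B))"

end

(* Fix t >= 0 and work at the dyadic scales 2^-k.  If a set A has measure a and the gap g
   satisfies C beta^g <= a/2, exponential mixing shows that the orbit of a point misses A at
   all the times g, 2g, ..., mg with probability at most (1 - a/2)^m.  Taking g linear in k
   and m of order k 2^(kt), the points missing some dyadic ball B(j 2^-k, 2^(1-k)) of measure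
   at least 2^-kt form a set of measure O(4^-k), so by Borel-Cantelli almost every x
   eventually enters every such heavy ball within N_k = O(k^2 2^(kt)) steps.  If the upper
   local dimension at y is below t, the ball B(y, 2^-k) has measure above 2^-kt for large k
   and lies in a heavy dyadic ball contained in B(y, 3 2^-k); hence tau_r(x,y) <= N_k for
   r between 3 2^-k and 6 2^-k, and the upper hitting exponent is at most t.  Letting t run
   through the nonnegative rationals gives the theorem. *)

theory Submission
  imports Defs "HOL-Real_Asymp.Real_Asymp"
begin

lemma invariant_measure_funpow:
  assumes "invariant_measure T \<nu>"
  shows "invariant_measure (T ^^ n) \<nu>"
proof -
  have T: "T \<in> \<nu> \<rightarrow>\<^sub>M \<nu>"
    and pres: "\<And>B. B \<in> sets \<nu> \<Longrightarrow> measure \<nu> (T -` B \<inter> space \<nu>) = measure \<nu> B"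
    using assms unfolding invariant_measure_def by auto
  have "measure \<nu> ((T ^^ n) -` B \<inter> space \<nu>) = measure \<nu> B" if B: "B \<in> sets \<nu>" for B
  proof (induction n)
    case 0
    then show ?case using sets.sets_into_space[OF B] by (simp add: Int_absorb2)
  next
    case (Suc n)
    have "(T ^^ Suc n) -` B \<inter> space \<nu> = T -` ((T ^^ n) -` B \<inter> space \<nu>) \<inter> space \<nu>"
      using measurable_space[OF T] by (auto simp: funpow_Suc_right simp del: funpow.simps)
    moreover have "(T ^^ n) -` B \<inter> space \<nu> \<in> sets \<nu>"
      using measurable_compose_n[OF T] B by (simp add: measurable_sets)
    ultimately show ?case using pres Suc by metis
  qed
  then show ?thesis unfolding invariant_measure_def using measurable_compose_n[OF T] by blast
qed

lemma (in prob_space) measure_vimage_Diff_le: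
  assumes f: "f \<in> M \<rightarrow>\<^sub>M M" and pres: "measure M (f -` B \<inter> space M) = measure M B"
    and A: "A \<in> sets M" and B: "B \<in> sets M"
    and mix: "\<bar>measure M (A \<inter> f -` B) - measure M A * measure M B\<bar> \<le> c * measure M B"
    and c: "c \<le> measure M A / 2"
  shows "measure M (f -` B \<inter> space M - A) \<le> (1 - measure M A / 2) * measure M B"
proof -
  have fB: "f -` B \<inter> space M \<in> sets M" using f B by (simp add: measurable_sets)
  have "(f -` B \<inter> space M) \<inter> A = A \<inter> f -` B" using sets.sets_into_space[OF A] by blast
  then have "measure M (f -` B \<inter> space M - A) = measure M B - measure M (A \<inter> f -` B)"
    using finite_measure_Diff'[OF fB A] pres by simp
  also have "\<dots> \<le> measure M B - (measure M A - c) * measure M B"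
    using mix by (simp add: abs_le_iff algebra_simps)
  also have "\<dots> \<le> (1 - measure M A / 2) * measure M B"
    using mult_right_mono[OF c, of "measure M B"] by (simp add: algebra_simps)
  finally show ?thesis .
qed

text \<open>Avoiding \<open>A\<close> for one more step means lying in \<open>f\<^sup>-\<^sup>1(B) - A\<close>, with \<open>B\<close> the previous
  avoidance set, so the one-step mixing bound applies to this \<open>B\<close>.\<close>
lemma (in prob_space) measure_orbit_avoids_le:
  assumes f: "f \<in> M \<rightarrow>\<^sub>M M"
    and pres: "\<And>B. B \<in> sets M \<Longrightarrow> measure M (f -` B \<inter> space M) = measure M B"
    and A: "A \<in> sets M"
    and mix: "\<And>B. B \<in> sets M \<Longrightarrow>
      \<bar>measure M (A \<inter> f -` B) - measure M A * measure M B\<bar> \<le> c * measure M B"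
    and c: "c \<le> measure M A / 2"
  shows "measure M {x \<in> space M. \<forall>i\<in>{1..m}. (f ^^ i) x \<notin> A} \<le> (1 - measure M A / 2) ^ m"
proof -
  define H where "H m = {x \<in> space M. \<forall>i<m. (f ^^ i) x \<notin> A}" for m
  have H_sets: "H m \<in> sets M" for m
    unfolding H_def using measurable_compose_n[OF f] A by measurable
  have H_Suc: "H (Suc m) = f -` H m \<inter> space M - A" for m
    using measurable_space[OF f]
    by (auto simp: H_def All_less_Suc2 funpow_Suc_right simp del: funpow.simps)
  have "measure M (H m) \<le> (1 - measure M A / 2) ^ m" for m
  proof (induction m)
    case 0
    then show ?case by (simp add: H_def)
  next
    case (Suc m)
    have "measure M (H (Suc m)) \<le> (1 - measure M A / 2) * measure M (H m)"
      unfolding H_Suc using H_sets A mix c by (intro measure_vimage_Diff_le f pres) auto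
    also have "\<dots> \<le> (1 - measure M A / 2) * (1 - measure M A / 2) ^ m"
      using Suc prob_le_1[of A] by (intro mult_left_mono) linarith+
    finally show ?case by simp
  qed
  moreover have "{x \<in> space M. \<forall>i\<in>{1..m}. (f ^^ i) x \<notin> A} = f -` H m \<inter> space M"
    using measurable_space[OF f] unfolding image_Suc_lessThan[symmetric]
    by (auto simp: H_def funpow_Suc_right simp del: funpow.simps)
  ultimately show ?thesis using pres H_sets by simp
qed

lemma one_minus_half_power_le:
  fixes a :: real
  assumes "0 \<le> a" "a \<le> 1" "6 * real k \<le> a * real m"
  shows "(1 - a / 2) ^ m \<le> (1 / 8) ^ k"
proof -
  have "(1 - a / 2) ^ m \<le> exp (- a / 2) ^ m"
    using assms(1,2) exp_ge_add_one_self[of "- a / 2"] by (intro power_mono) auto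
  also have "\<dots> = exp (- (a * real m) / 2)" by (simp flip: exp_of_nat_mult)
  also have "\<dots> \<le> exp (- 3) ^ k" using assms(3) by (simp flip: exp_of_nat_mult)
  also have "\<dots> \<le> (1 / 8) ^ k"
  proof (rule power_mono)
    have "(2::real) ^ 3 \<le> exp 1 ^ 3"
      using exp_ge_add_one_self[of 1] by (intro power_mono) auto
    then show "exp (- 3) \<le> (1 / 8 :: real)" by (simp add: exp_minus field_simps flip: exp_of_nat_mult)
  qed simp
  finally show ?thesis .
qed

lemma hit_time_le:
  assumes "1 \<le> n" "(T ^^ n) x \<in> ball y r"
  shows "\<exists>m. hit_time T r x y = ereal (real m) \<and> 1 \<le> m \<and> m \<le> n"
proof -
  let ?P = "\<lambda>n. 1 \<le> n \<and> (T ^^ n) x \<in> ball y r"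
  have "?P n" using assms by blast
  then show ?thesis
    unfolding hit_time_def using LeastI[of ?P n] Least_le[of ?P n] by auto
qed

lemma dyadic_approx:
  fixes y :: real
  assumes "y \<in> {0..1}"
  shows "\<exists>j\<le>2 ^ k. dist y (real j / 2 ^ k) < 1 / 2 ^ k"
proof (intro exI conjI)
  define j where "j = nat \<lfloor>y * 2 ^ k\<rfloor>"
  have j: "real j = of_int \<lfloor>y * 2 ^ k\<rfloor>" unfolding j_def using assms by simp
  have lower: "real j \<le> y * 2 ^ k" and upper: "y * 2 ^ k < real j + 1"
    using j real_of_int_floor_add_one_gt[of "y * 2 ^ k"] by simp_all
  have "y * 2 ^ k \<le> 1 * 2 ^ k" using assms by (intro mult_right_mono) auto
  with lower have "real j \<le> 2 ^ k" by linarith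
  then show "j \<le> 2 ^ k" by simp
  have "real j / 2 ^ k \<le> y" "y < real j / 2 ^ k + 1 / 2 ^ k"
    using lower upper by (simp_all add: field_simps)
  then show "dist y (real j / 2 ^ k) < 1 / 2 ^ k" by (simp add: dist_real_def)
qed

lemma exists_dyadic_scale_between:
  fixes c r :: real
  assumes "0 < c" "0 < r" "r < c / 2 ^ K"
  shows "\<exists>k>K. c / 2 ^ k \<le> r \<and> r < 2 * c / 2 ^ k"
proof -
  obtain n where "(1 / 2) ^ n < r / c" using real_arch_pow_inv[of "r / c" "1 / 2"] assms by auto
  then have ex: "\<exists>k. c / 2 ^ k \<le> r" using assms by (intro exI[of _ n]) (simp add: field_simps)
  define k where "k = (LEAST k. c / 2 ^ k \<le> r)"
  have k: "c / 2 ^ k \<le> r" unfolding k_def by (rule LeastI_ex[OF ex])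
  have "K < k"
  proof (rule ccontr)
    assume "\<not> K < k"
    then have "c / 2 ^ K \<le> c / 2 ^ k" using assms(1) by (simp add: frac_le power_increasing)
    then show False using k assms(3) by simp
  qed
  then obtain k' where k': "k = Suc k'" by (cases k) auto
  have "\<not> c / 2 ^ k' \<le> r" using not_less_Least[of k' "\<lambda>k. c / 2 ^ k \<le> r"] k' unfolding k_def by simp
  then show ?thesis using \<open>K < k\<close> k k' by (intro exI[of _ k]) auto
qed

lemma eventually_log_growth_le:
  fixes c t q :: real
  assumes "t < q"
  shows "\<forall>\<^sub>F k in sequentially.
    ln c + 2 * ln (real k) + real k * t * ln 2 \<le> q * (real k * ln 2 - ln 6)"
proof -
  have "(\<lambda>k. (ln c + q * ln 6 + 2 * ln (real k)) / real k) \<longlonglongrightarrow> 0" by real_asymp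
  then have "\<forall>\<^sub>F k in sequentially. (ln c + q * ln 6 + 2 * ln (real k)) / real k < (q - t) * ln 2"
    using assms by (intro order_tendstoD) auto
  then show ?thesis using eventually_gt_at_top[of 0]
  proof eventually_elim
    case (elim k)
    then have "ln c + q * ln 6 + 2 * ln (real k) < (q - t) * ln 2 * real k"
      by (simp add: divide_less_eq)
    then show ?case by (simp add: algebra_simps)
  qed
qed

lemma upper_hit_exp_le_of_dyadic_hits_ln_bound:
  assumes "\<forall>\<^sub>F k in sequentially. (\<exists>n\<in>{1..N k}. (T ^^ n) x \<in> ball y (3 / 2 ^ k))
    \<and> ln (real (N k)) \<le> q * (real k * ln 2 - ln 6)"
  shows "upper_hit_exp T x y \<le> ereal q"
proof -
  obtain K where K: "\<And>k. K \<le> k \<Longrightarrow> ((\<exists>n\<in>{1..N k}. (T ^^ n) x \<in> ball y (3 / 2 ^ k))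
    \<and> ln (real (N k)) \<le> q * (real k * ln 2 - ln 6)) \<and> 3 \<le> k"
    using eventually_conj[OF assms eventually_ge_at_top[of 3]]
    unfolding eventually_sequentially by blast
  have "\<forall>\<^sub>F r in at_right 0. (if hit_time T r x y = \<infinity> then \<infinity>
          else ereal (ln (real_of_ereal (hit_time T r x y)) / - ln r)) \<le> ereal q"
  proof (rule eventually_at_rightI[of 0 "3 / 2 ^ K"])
    fix r :: real assume r: "r \<in> {0<..<3 / 2 ^ K}"
    then obtain k where "K < k" and k: "3 / 2 ^ k \<le> r" "r < 6 / 2 ^ k"
      using exists_dyadic_scale_between[of 3 r K] by auto
    then obtain n where n: "n \<in> {1..N k}" "(T ^^ n) x \<in> ball y (3 / 2 ^ k)"
      and N: "ln (real (N k)) \<le> q * (real k * ln 2 - ln 6)" and "3 \<le> k"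
      using K[OF less_imp_le] by blast
    have "(T ^^ n) x \<in> ball y r" using n(2) k(1) by auto
    then obtain m where m: "hit_time T r x y = ereal (real m)" "1 \<le> m" "m \<le> N k"
      using hit_time_le[of n T x y r] n(1) by auto
    have "(2::real) ^ 3 \<le> 2 ^ k" using \<open>3 \<le> k\<close> by (intro power_increasing) auto
    then have "ln 6 < ln (2 ^ k :: real)" by simp
    then have D: "0 < real k * ln 2 - ln 6" by (simp add: ln_realpow)
    have "real k * ln 2 - ln 6 = - ln (6 / 2 ^ k)" by (simp add: ln_div ln_realpow)
    also have "\<dots> < - ln r" using r k(2) by simp
    finally have lnr: "real k * ln 2 - ln 6 < - ln r" .
    have "ln (real m) / - ln r \<le> ln (real m) / (real k * ln 2 - ln 6)"
      using D lnr m(2) by (intro divide_left_mono mult_pos_pos) auto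
    also have "\<dots> \<le> ln (real (N k)) / (real k * ln 2 - ln 6)"
      using D m by (intro divide_right_mono) auto
    also have "\<dots> \<le> q" using D N by (simp add: divide_le_eq mult.commute)
    finally show "(if hit_time T r x y = \<infinity> then \<infinity>
          else ereal (ln (real_of_ereal (hit_time T r x y)) / - ln r)) \<le> ereal q"
      using m(1) by simp
  qed simp
  then show ?thesis unfolding upper_hit_exp_def by (rule Limsup_bounded)
qed

lemma upper_hit_exp_le_of_dyadic_hits:
  fixes c t :: real
  assumes hits: "\<forall>\<^sub>F k in sequentially. \<exists>n\<in>{1..N k}. (T ^^ n) x \<in> ball y (3 / 2 ^ k)"
    and c: "0 < c" and N: "\<And>k. real (N k) \<le> c * real k ^ 2 * 2 powr (real k * t)"
  shows "upper_hit_exp T x y \<le> ereal t"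
proof (rule dense_ge)
  fix z assume "ereal t < z"
  then show "upper_hit_exp T x y \<le> z"
  proof (cases z)
    case (real q)
    with \<open>ereal t < z\<close> have "t < q" by simp
    have "\<forall>\<^sub>F k in sequentially. (\<exists>n\<in>{1..N k}. (T ^^ n) x \<in> ball y (3 / 2 ^ k))
      \<and> ln (real (N k)) \<le> q * (real k * ln 2 - ln 6)"
      using hits eventually_log_growth_le[OF \<open>t < q\<close>, of c] eventually_gt_at_top[of 0]
    proof eventually_elim
      case (elim k)
      then have "1 \<le> N k" by auto
      then have "ln (real (N k)) \<le> ln (c * real k ^ 2 * 2 powr (real k * t))"
        using N[of k] by simp
      also have "\<dots> = ln c + 2 * ln (real k) + real k * t * ln 2"
        using c elim by (simp add: ln_mult ln_realpow ln_powr)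
      finally show ?case using elim by simp
    qed
    then show ?thesis using real by (simp add: upper_hit_exp_le_of_dyadic_hits_ln_bound)
  qed auto
qed

lemma eventually_powr_less_measure_ball:
  assumes "upper_local_dim \<nu> y < ereal t"
  shows "\<forall>\<^sub>F r in at_right 0. r powr t < measure \<nu> (ball y r \<inter> space \<nu>)"
proof -
  have "\<forall>\<^sub>F r in at_right 0. r \<in> {0<..<1::real}" by (rule eventually_at_rightI[of 0 1]) auto
  with Limsup_lessD[OF assms[unfolded upper_local_dim_def]] show ?thesis
  proof eventually_elim
    case (elim r)
    let ?\<mu> = "measure \<nu> (ball y r \<inter> space \<nu>)"
    have "?\<mu> \<noteq> 0" and "ln ?\<mu> / ln r < t" using elim(1) by (auto split: if_splits)
    moreover have "ln r < 0" using elim(2) by simp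
    ultimately have "t * ln r < ln ?\<mu>" by (simp add: divide_less_eq)
    have "0 < ?\<mu>"
      using measure_nonneg[of \<nu> "ball y r \<inter> space \<nu>"] \<open>?\<mu> \<noteq> 0\<close> by linarith
    have "exp (t * ln r) < exp (ln ?\<mu>)" using \<open>t * ln r < ln ?\<mu>\<close> by simp
    also have "\<dots> = ?\<mu>" using \<open>0 < ?\<mu>\<close> by simp
    finally have "exp (t * ln r) < ?\<mu>" .
    then show ?case using elim(2) by (simp add: powr_def mult.commute)
  qed
qed

lemma upper_local_dim_nonneg:
  assumes "prob_space \<nu>"
  shows "0 \<le> upper_local_dim \<nu> y"
proof -
  let ?f = "\<lambda>r. if measure \<nu> (ball y r \<inter> space \<nu>) = 0 then \<infinity>
             else ereal (ln (measure \<nu> (ball y r \<inter> space \<nu>)) / ln r)"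
  have "\<forall>\<^sub>F r in at_right 0. 0 \<le> ?f r"
  proof (rule eventually_at_rightI[of 0 1])
    fix r :: real assume r: "r \<in> {0<..<1}"
    show "0 \<le> ?f r"
    proof (cases "measure \<nu> (ball y r \<inter> space \<nu>) = 0")
      case False
      then have "ln (measure \<nu> (ball y r \<inter> space \<nu>)) \<le> 0"
        using prob_space.prob_le_1[OF assms] measure_nonneg[of \<nu>] by (simp add: less_le)
      then show ?thesis using r False by (simp add: divide_nonpos_neg)
    qed simp
  qed simp
  then have "0 \<le> Liminf (at_right 0) ?f" by (rule Liminf_bounded)
  also have "\<dots> \<le> Limsup (at_right 0) ?f" by (rule Liminf_le_Limsup) simp
  finally show ?thesis unfolding upper_local_dim_def .
qed

lemma one_over_two_power_powr: "(1 / 2 ^ k) powr t = 2 powr (- (real k * t))"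
  by (simp add: powr_divide powr_powr powr_minus_divide flip: powr_realpow)

lemma eventually_mixing_gap:
  fixes C \<beta> t :: real
  assumes "0 < \<beta>" "\<beta> < 1"
  obtains G where "1 \<le> G" "\<forall>\<^sub>F k in sequentially. C * \<beta> ^ (G * k) \<le> 2 powr (- (real k * t)) / 2"
proof -
  obtain n where n: "\<beta> ^ n < 2 powr (- t) / 4" using real_arch_pow_inv[of "2 powr (- t) / 4" \<beta>] assms by auto
  have "\<beta> ^ Suc n \<le> \<beta> ^ n" using assms by (intro power_decreasing) auto
  with n have \<beta>G: "\<beta> ^ Suc n \<le> 2 powr (- t) / 4" by linarith
  have "(\<lambda>k. \<bar>C\<bar> * (1 / 4) ^ k) \<longlonglongrightarrow> \<bar>C\<bar> * 0"
    by (intro tendsto_mult LIMSEQ_realpow_zero) auto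
  then have "\<forall>\<^sub>F k in sequentially. \<bar>C\<bar> * (1 / 4) ^ k < 1 / 2" by (intro order_tendstoD) auto
  then have "\<forall>\<^sub>F k in sequentially. C * \<beta> ^ (Suc n * k) \<le> 2 powr (- (real k * t)) / 2"
  proof eventually_elim
    case (elim k)
    have "\<beta> ^ (Suc n * k) \<le> (2 powr (- t) / 4) ^ k"
      unfolding power_mult using \<beta>G assms by (intro power_mono) auto
    then have "C * \<beta> ^ (Suc n * k) \<le> \<bar>C\<bar> * (2 powr (- t) / 4) ^ k"
      using assms by (intro mult_mono) auto
    also have "\<dots> = \<bar>C\<bar> * (1 / 4) ^ k * 2 powr (- (real k * t))"
      by (simp add: power_divide powr_power power_one_over mult.commute)
    also have "\<dots> \<le> 2 powr (- (real k * t)) / 2"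
      using mult_right_mono[OF less_imp_le[OF elim], of "2 powr (- (real k * t))"] by simp
    finally show ?case .
  qed
  then show thesis by (intro that[of "Suc n"]) auto
qed

lemma gapped_sample_count_le:
  fixes t :: real
  assumes "0 \<le> t"
  shows "real (G * k * nat \<lceil>6 * real k * 2 powr (real k * t)\<rceil>)
    \<le> 7 * real G * real k ^ 2 * 2 powr (real k * t)"
proof (cases "k = 0")
  case False
  have "1 * 1 \<le> real k * 2 powr (real k * t)"
    using False assms by (intro mult_mono ge_one_powr_ge_zero) auto
  moreover have "real (nat \<lceil>6 * real k * 2 powr (real k * t)\<rceil>) \<le> 6 * real k * 2 powr (real k * t) + 1"
    using of_int_ceiling_le_add_one[of "6 * real k * 2 powr (real k * t)"] by simp
  ultimately have "real (nat \<lceil>6 * real k * 2 powr (real k * t)\<rceil>) \<le> 7 * real k * 2 powr (real k * t)"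
    by linarith
  from mult_left_mono[OF this, of "real G * real k"] show ?thesis
    by (simp add: power2_eq_square algebra_simps)
qed simp

locale exp_mixing_system = prob_space \<nu> for \<nu> :: "real measure" +
  fixes T :: "real \<Rightarrow> real" and C \<beta> :: real
  assumes space_eq: "space \<nu> = {0..1}"
    and sets_eq: "sets \<nu> = sets (restrict_space borel {0..1})"
    and invariant: "invariant_measure T \<nu>"
    and \<beta>_pos: "0 < \<beta>" and \<beta>_less_1: "\<beta> < 1"
    and mixing: "\<And>y r B n. y \<in> space \<nu> \<Longrightarrow> 0 < r \<Longrightarrow> B \<in> sets \<nu> \<Longrightarrow> 1 \<le> n \<Longrightarrow>
      \<bar>measure \<nu> (ball y r \<inter> (T ^^ n) -` B \<inter> space \<nu>)
        - measure \<nu> (ball y r \<inter> space \<nu>) * measure \<nu> B\<bar> \<le> C * \<beta> ^ n * measure \<nu> B"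
begin

lemma ball_Int_space_sets: "ball z r \<inter> space \<nu> \<in> sets \<nu>"
proof -
  have "{0..1} \<inter> ball z r \<in> sets (restrict_space borel {0..1::real})"
    unfolding sets_restrict_space by (rule imageI) simp
  then show ?thesis using sets_eq space_eq by (simp add: Int_commute)
qed

lemma sets_orbit_avoids_ball:
  "{x \<in> space \<nu>. \<forall>i\<in>{1..m}. ((T ^^ g) ^^ i) x \<notin> ball z r \<inter> space \<nu>} \<in> sets \<nu>"
proof -
  have "T ^^ g \<in> \<nu> \<rightarrow>\<^sub>M \<nu>"
    using invariant_measure_funpow[OF invariant] unfolding invariant_measure_def by blast
  then show ?thesis using measurable_compose_n ball_Int_space_sets by measurable
qed

lemma measure_orbit_avoids_heavy_ball_le:
  assumes z: "z \<in> space \<nu>" and \<rho>: "0 < \<rho>" and g: "1 \<le> g"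
    and heavy: "a \<le> measure \<nu> (ball z \<rho> \<inter> space \<nu>)" and gap: "C * \<beta> ^ g \<le> a / 2"
    and m: "6 * real k \<le> a * real m"
  shows "measure \<nu> {x \<in> space \<nu>. \<forall>i\<in>{1..m}. ((T ^^ g) ^^ i) x \<notin> ball z \<rho> \<inter> space \<nu>}
    \<le> (1 / 8) ^ k"
proof -
  let ?A = "ball z \<rho> \<inter> space \<nu>"
  have Tg: "T ^^ g \<in> \<nu> \<rightarrow>\<^sub>M \<nu>"
    "\<And>B. B \<in> sets \<nu> \<Longrightarrow> measure \<nu> ((T ^^ g) -` B \<inter> space \<nu>) = measure \<nu> B"
    using invariant_measure_funpow[OF invariant] unfolding invariant_measure_def by blast+
  have "measure \<nu> {x \<in> space \<nu>. \<forall>i\<in>{1..m}. ((T ^^ g) ^^ i) x \<notin> ?A}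
    \<le> (1 - measure \<nu> ?A / 2) ^ m"
  proof (rule measure_orbit_avoids_le[OF Tg ball_Int_space_sets])
    fix B assume B: "B \<in> sets \<nu>"
    have "?A \<inter> (T ^^ g) -` B = ball z \<rho> \<inter> (T ^^ g) -` B \<inter> space \<nu>" by blast
    then show "\<bar>measure \<nu> (?A \<inter> (T ^^ g) -` B) - measure \<nu> ?A * measure \<nu> B\<bar>
      \<le> C * \<beta> ^ g * measure \<nu> B"
      using mixing[OF z \<rho> B g] by simp
  next
    show "C * \<beta> ^ g \<le> measure \<nu> ?A / 2" using gap heavy by simp
  qed
  also have "\<dots> \<le> (1 / 8) ^ k"
  proof (rule one_minus_half_power_le)
    show "6 * real k \<le> measure \<nu> ?A * real m"
      using m mult_right_mono[OF heavy, of "real m"] by simp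
  qed auto
  finally show ?thesis .
qed

definition heavy_dyadic_miss_set :: "real \<Rightarrow> nat \<Rightarrow> nat \<Rightarrow> nat \<Rightarrow> real set" where
  "heavy_dyadic_miss_set t k g m =
    (\<Union>j\<in>{j. j \<le> 2 ^ k \<and>
        2 powr (- (real k * t)) \<le> measure \<nu> (ball (real j / 2 ^ k) (2 / 2 ^ k) \<inter> space \<nu>)}.
      {x \<in> space \<nu>. \<forall>i\<in>{1..m}. ((T ^^ g) ^^ i) x \<notin> ball (real j / 2 ^ k) (2 / 2 ^ k) \<inter> space \<nu>})"

lemma sets_heavy_dyadic_miss_set: "heavy_dyadic_miss_set t k g m \<in> sets \<nu>"
  unfolding heavy_dyadic_miss_set_def using sets_orbit_avoids_ball by auto

lemma measure_heavy_dyadic_miss_set_le: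
  assumes g: "1 \<le> g" and gap: "C * \<beta> ^ g \<le> 2 powr (- (real k * t)) / 2"
    and m: "6 * real k * 2 powr (real k * t) \<le> real m"
  shows "measure \<nu> (heavy_dyadic_miss_set t k g m) \<le> 2 * (1 / 4) ^ k"
proof -
  define J where "J = {j. j \<le> 2 ^ k \<and>
    2 powr (- (real k * t)) \<le> measure \<nu> (ball (real j / 2 ^ k) (2 / 2 ^ k) \<inter> space \<nu>)}"
  have "finite J" unfolding J_def by simp
  then have "measure \<nu> (heavy_dyadic_miss_set t k g m) \<le> (\<Sum>j\<in>J.
      measure \<nu> {x \<in> space \<nu>. \<forall>i\<in>{1..m}. ((T ^^ g) ^^ i) x \<notin> ball (real j / 2 ^ k) (2 / 2 ^ k) \<inter> space \<nu>})"
    unfolding heavy_dyadic_miss_set_def J_def[symmetric]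
    using sets_orbit_avoids_ball by (intro measure_UNION_le) auto
  also have "\<dots> \<le> real (card J) * (1 / 8) ^ k"
  proof (intro sum_bounded_above measure_orbit_avoids_heavy_ball_le)
    fix j assume "j \<in> J"
    then show "real j / 2 ^ k \<in> space \<nu>"
      and "2 powr (- (real k * t)) \<le> measure \<nu> (ball (real j / 2 ^ k) (2 / 2 ^ k) \<inter> space \<nu>)"
      unfolding J_def space_eq by (auto simp: field_simps)
    have "6 * real k = 2 powr (- (real k * t)) * (6 * real k * 2 powr (real k * t))"
      by (simp add: powr_minus field_simps)
    also have "\<dots> \<le> 2 powr (- (real k * t)) * real m" using m by (intro mult_left_mono) simp_all
    finally show "6 * real k \<le> 2 powr (- (real k * t)) * real m" .
  qed (use g gap in auto)
  also have "\<dots> \<le> real (2 * 2 ^ k) * (1 / 8) ^ k"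
  proof -
    have "card J \<le> card {..(2::nat) ^ k}" unfolding J_def by (intro card_mono) auto
    also have "\<dots> \<le> 2 * 2 ^ k" using one_le_power[of "2::nat" k] by simp
    finally have "real (card J) \<le> real (2 * 2 ^ k)" by (rule of_nat_mono)
    then show ?thesis by (intro mult_right_mono) auto
  qed
  also have "\<dots> = 2 * (1 / 4) ^ k" by (simp add: power_one_over field_simps flip: power_mult_distrib)
  finally show ?thesis .
qed

text \<open>The orbit is sampled at the times \<open>G k, 2 G k, \<dots>, m\<^sub>k G k\<close>: the gap \<open>G k\<close> makes the mixing
  error at most half the measure of a heavy ball, and \<open>m\<^sub>k \<approx> 6 k 2\<^sup>k\<^sup>t\<close> samples make missing it
  cost \<open>8\<^sup>-\<^sup>k\<close>, which beats the \<open>2\<^sup>k + 1\<close> dyadic centres.\<close>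
lemma AE_eventually_hits_heavy_dyadic_balls:
  assumes "0 \<le> t"
  obtains c N where "0 < c" "\<And>k. real (N k) \<le> c * real k ^ 2 * 2 powr (real k * t)"
    "AE x in \<nu>. \<forall>\<^sub>F k in sequentially. \<forall>j\<le>2 ^ k.
       2 powr (- (real k * t)) \<le> measure \<nu> (ball (real j / 2 ^ k) (2 / 2 ^ k) \<inter> space \<nu>) \<longrightarrow>
       (\<exists>n\<in>{1..N k}. (T ^^ n) x \<in> ball (real j / 2 ^ k) (2 / 2 ^ k))"
proof -
  obtain G where G: "1 \<le> G"
    and gap: "\<forall>\<^sub>F k in sequentially. C * \<beta> ^ (G * k) \<le> 2 powr (- (real k * t)) / 2"
    using eventually_mixing_gap[OF \<beta>_pos \<beta>_less_1] by metis
  define m where "m k = nat \<lceil>6 * real k * 2 powr (real k * t)\<rceil>" for k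
  define E where "E k = heavy_dyadic_miss_set t k (G * k) (m k)" for k
  have "\<forall>\<^sub>F k in sequentially. norm (measure \<nu> (E k)) \<le> 2 * (1 / 4) ^ k"
    using gap eventually_gt_at_top[of 0]
    by eventually_elim (use G in \<open>auto simp: E_def m_def intro!: measure_heavy_dyadic_miss_set_le\<close>)
  moreover have "summable (\<lambda>k. 2 * (1 / 4 :: real) ^ k)" by (intro summable_mult summable_geometric) auto
  ultimately have "summable (\<lambda>k. measure \<nu> (E k))" by (rule summable_comparison_test_ev)
  then have avoids_E: "AE x in \<nu>. \<forall>\<^sub>F k in sequentially. x \<in> space \<nu> - E k"
    by (intro borel_cantelli_AE1) (simp_all add: E_def sets_heavy_dyadic_miss_set less_top[symmetric])
  show thesis
  proof (rule that)
    show "0 < 7 * real G" using G by simp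
    show "real (G * k * m k) \<le> 7 * real G * real k ^ 2 * 2 powr (real k * t)" for k
      unfolding m_def by (rule gapped_sample_count_le[OF assms])
    show "AE x in \<nu>. \<forall>\<^sub>F k in sequentially. \<forall>j\<le>2 ^ k.
       2 powr (- (real k * t)) \<le> measure \<nu> (ball (real j / 2 ^ k) (2 / 2 ^ k) \<inter> space \<nu>) \<longrightarrow>
       (\<exists>n\<in>{1..G * k * m k}. (T ^^ n) x \<in> ball (real j / 2 ^ k) (2 / 2 ^ k))"
      using avoids_E
    proof eventually_elim
      case (elim x)
      show ?case using elim eventually_gt_at_top[of 0]
      proof eventually_elim
        case (elim k)
        show ?case
        proof (intro allI impI)
          fix j assume "j \<le> 2 ^ k"
            and "2 powr (- (real k * t)) \<le> measure \<nu> (ball (real j / 2 ^ k) (2 / 2 ^ k) \<inter> space \<nu>)"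
          with elim obtain i where i: "i \<in> {1..m k}"
            "((T ^^ (G * k)) ^^ i) x \<in> ball (real j / 2 ^ k) (2 / 2 ^ k) \<inter> space \<nu>"
            unfolding E_def heavy_dyadic_miss_set_def by auto
          show "\<exists>n\<in>{1..G * k * m k}. (T ^^ n) x \<in> ball (real j / 2 ^ k) (2 / 2 ^ k)"
          proof
            show "(T ^^ (G * k * i)) x \<in> ball (real j / 2 ^ k) (2 / 2 ^ k)"
              using i(2) by (simp add: funpow_mult)
            show "G * k * i \<in> {1..G * k * m k}" using i G elim(2) by auto
          qed
        qed
      qed
    qed
  qed
qed

lemma heavy_dyadic_ball_near:
  assumes y: "y \<in> {0..1}"
    and heavy: "2 powr (- (real k * t)) < measure \<nu> (ball y (1 / 2 ^ k) \<inter> space \<nu>)"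
  obtains j where "j \<le> 2 ^ k"
    "2 powr (- (real k * t)) \<le> measure \<nu> (ball (real j / 2 ^ k) (2 / 2 ^ k) \<inter> space \<nu>)"
    "ball (real j / 2 ^ k) (2 / 2 ^ k) \<subseteq> ball y (3 / 2 ^ k)"
proof -
  obtain j where j: "j \<le> 2 ^ k" and yz: "dist y (real j / 2 ^ k) < 1 / 2 ^ k"
    using dyadic_approx[OF y] by blast
  have radii: "1 / 2 ^ k + 1 / 2 ^ k = (2 / 2 ^ k :: real)" "1 / 2 ^ k + 2 / 2 ^ k = (3 / 2 ^ k :: real)"
    by (simp_all add: field_simps)
  have "ball y (1 / 2 ^ k) \<subseteq> ball (real j / 2 ^ k) (2 / 2 ^ k)"
    using yz radii by (simp add: ball_subset_ball_iff dist_commute)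
  then have "measure \<nu> (ball y (1 / 2 ^ k) \<inter> space \<nu>)
    \<le> measure \<nu> (ball (real j / 2 ^ k) (2 / 2 ^ k) \<inter> space \<nu>)"
    by (intro finite_measure_mono ball_Int_space_sets) blast
  moreover have "ball (real j / 2 ^ k) (2 / 2 ^ k) \<subseteq> ball y (3 / 2 ^ k)"
    unfolding ball_subset_ball_iff dist_commute[of "real j / 2 ^ k" y]
    using yz radii by (intro disjI1) linarith
  ultimately show thesis using that j heavy by simp
qed

lemma AE_upper_hit_exp_le:
  assumes "0 \<le> t"
  shows "AE x in \<nu>. \<forall>y\<in>{0..1}.
    upper_local_dim \<nu> y < ereal t \<longrightarrow> upper_hit_exp T x y \<le> ereal t"
proof -
  obtain c N where c: "0 < c" and N: "\<And>k. real (N k) \<le> c * real k ^ 2 * 2 powr (real k * t)"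
    and hits: "AE x in \<nu>. \<forall>\<^sub>F k in sequentially. \<forall>j\<le>2 ^ k.
       2 powr (- (real k * t)) \<le> measure \<nu> (ball (real j / 2 ^ k) (2 / 2 ^ k) \<inter> space \<nu>) \<longrightarrow>
       (\<exists>n\<in>{1..N k}. (T ^^ n) x \<in> ball (real j / 2 ^ k) (2 / 2 ^ k))"
    using AE_eventually_hits_heavy_dyadic_balls[OF assms] by blast
  have radii_to_0: "filterlim (\<lambda>k. 1 / 2 ^ k :: real) (at_right 0) sequentially"
    by (intro tendsto_imp_filterlim_at_right)
       (auto simp: power_one_over[symmetric] intro: LIMSEQ_realpow_zero)
  show ?thesis using hits
  proof eventually_elim
    case (elim x)
    show ?case
    proof (intro ballI impI)
      fix y :: real assume y: "y \<in> {0..1}" and dim: "upper_local_dim \<nu> y < ereal t"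
      from eventually_powr_less_measure_ball[OF dim] radii_to_0
      have "\<forall>\<^sub>F k in sequentially. (1 / 2 ^ k) powr t < measure \<nu> (ball y (1 / 2 ^ k) \<inter> space \<nu>)"
        by (rule eventually_compose_filterlim)
      then have "\<forall>\<^sub>F k in sequentially.
          2 powr (- (real k * t)) < measure \<nu> (ball y (1 / 2 ^ k) \<inter> space \<nu>)"
        by (simp only: one_over_two_power_powr)
      then have "\<forall>\<^sub>F k in sequentially. \<exists>n\<in>{1..N k}. (T ^^ n) x \<in> ball y (3 / 2 ^ k)"
        using elim
      proof eventually_elim
        case (elim k)
        obtain j where "j \<le> 2 ^ k"
          and "2 powr (- (real k * t)) \<le> measure \<nu> (ball (real j / 2 ^ k) (2 / 2 ^ k) \<inter> space \<nu>)"
          and near: "ball (real j / 2 ^ k) (2 / 2 ^ k) \<subseteq> ball y (3 / 2 ^ k)"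
          by (rule heavy_dyadic_ball_near[OF y elim(1)])
        with elim(2) obtain n where "n \<in> {1..N k}" "(T ^^ n) x \<in> ball (real j / 2 ^ k) (2 / 2 ^ k)"
          by blast
        with near show ?case by blast
      qed
      then show "upper_hit_exp T x y \<le> ereal t" by (rule upper_hit_exp_le_of_dyadic_hits[OF _ c N])
    qed
  qed
qed

end

lemma ereal_le_of_rational_thresholds:
  fixes a b :: ereal
  assumes "0 \<le> a" and "\<And>t. t \<in> \<rat> \<Longrightarrow> 0 \<le> t \<Longrightarrow> a < ereal t \<Longrightarrow> b \<le> ereal t"
    and "ereal s \<le> b"
  shows "ereal s \<le> a"
proof (rule ccontr)
  assume "\<not> ereal s \<le> a"
  with assms(1) obtain d where "a = ereal d" "0 \<le> d" "d < s" by (cases a) auto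
  moreover obtain t where "t \<in> \<rat>" "d < t" "t < s" using Rats_dense_in_real[OF \<open>d < s\<close>] by blast
  ultimately have "b \<le> ereal t" using assms(2)[of t] by simp
  with assms(3) have "ereal s \<le> ereal t" by (rule order_trans)
  with \<open>t < s\<close> show False by simp
qed

theorem lemma5p4:
  fixes T :: "real \<Rightarrow> real" and \<nu> :: "real measure" and s :: real
  assumes "prob_space \<nu>"
    and "space \<nu> = {0..1}"
    and "sets \<nu> = sets (restrict_space borel {0..1::real})"
    and "invariant_measure T \<nu>"
    and "exp_mixing T \<nu>"
    and "s \<ge> 0"
  shows "AE x in \<nu>. \<forall>y\<in>{0..1}.
           upper_hit_exp T x y \<ge> ereal s \<longrightarrow> upper_local_dim \<nu> y \<ge> ereal s"
proof -
  obtain C \<beta> where "exp_mixing_system \<nu> T C \<beta>"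
    using assms(1-5) unfolding exp_mixing_def exp_mixing_system_def exp_mixing_system_axioms_def
    by blast
  then interpret exp_mixing_system \<nu> T C \<beta> .
  have "AE x in \<nu>. \<forall>t\<in>\<rat> \<inter> {0..}. \<forall>y\<in>{0..1}.
      upper_local_dim \<nu> y < ereal t \<longrightarrow> upper_hit_exp T x y \<le> ereal t"
    using AE_upper_hit_exp_le by (subst AE_ball_countable) (auto simp: countable_rat)
  then show ?thesis
  proof eventually_elim
    case (elim x)
    show ?case
    proof (intro ballI impI)
      fix y :: real assume "y \<in> {0..1}" "ereal s \<le> upper_hit_exp T x y"
      with elim show "ereal s \<le> upper_local_dim \<nu> y"
        by (intro ereal_le_of_rational_thresholds[OF upper_local_dim_nonneg[OF assms(1)]]) auto
    qed
  qed
qed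

end
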